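(* Let $G\rightrightarrows X$ be a topological groupoid which is proper and source-locally trivial. Then every fixed point $x\in X$ of $G$ is stable, i.e. every neighborhood of $x$ in $X$ contains a $G$-invariant neighborhood of $x$.
   Context: All spaces are Hausdorff and neighborhoods are open. $\alpha,\beta$ denote the target and source maps of $G$. $G$ is proper if the map $(\alpha,\beta):G\to X\times X$ is proper (preimages of compact sets are compact). $G$ is source-locally trivial if the source map $\beta:G\to X$ is a locally trivial fibration. A point $x\in X$ is a fixed point if its orbit $\{\alpha(g): \beta(g)=x\}$ is $\{x\}$. A subset $A\subseteq X$ is $G$-invariant if $\alpha(g)\in A$ whenever $\beta(g)\in A$. *)

theory Defs
  imports "HOL-Analysis.Analysis"
begin

text \<open>A topological groupoid with arrow space the type 'g and object space the type 'x
 (both Hausdorff, via the type class t2_space).  alpha = target, beta = source,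
 gmul g h is defined (composable) when beta g = alpha h, gunit x is the identity at x,
 invg is the inversion.\<close>

definition topological_groupoid ::
  "('g::t2_space \<Rightarrow> 'x::t2_space) \<Rightarrow> ('g \<Rightarrow> 'x) \<Rightarrow> ('g \<Rightarrow> 'g \<Rightarrow> 'g)
     \<Rightarrow> ('x \<Rightarrow> 'g) \<Rightarrow> ('g \<Rightarrow> 'g) \<Rightarrow> bool" where
  "topological_groupoid \<alpha> \<beta> gmul gunit invg \<longleftrightarrow>
     (\<forall>g h. \<beta> g = \<alpha> h \<longrightarrow> \<alpha> (gmul g h) = \<alpha> g \<and> \<beta> (gmul g h) = \<beta> h) \<and>
     (\<forall>g h k. \<beta> g = \<alpha> h \<and> \<beta> h = \<alpha> k \<longrightarrow> gmul (gmul g h) k = gmul g (gmul h k)) \<and>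
     (\<forall>x. \<alpha> (gunit x) = x \<and> \<beta> (gunit x) = x) \<and>
     (\<forall>g. gmul (gunit (\<alpha> g)) g = g \<and> gmul g (gunit (\<beta> g)) = g) \<and>
     (\<forall>g. \<alpha> (invg g) = \<beta> g \<and> \<beta> (invg g) = \<alpha> g \<and>
          gmul g (invg g) = gunit (\<alpha> g) \<and> gmul (invg g) g = gunit (\<beta> g)) \<and>
     continuous_on UNIV \<alpha> \<and> continuous_on UNIV \<beta> \<and>
     continuous_on UNIV gunit \<and> continuous_on UNIV invg \<and>
     continuous_on {(g, h). \<beta> g = \<alpha> h} (\<lambda>(g, h). gmul g h)"

definition proper_groupoid :: "('g::t2_space \<Rightarrow> 'x::t2_space) \<Rightarrow> ('g \<Rightarrow> 'x) \<Rightarrow> bool" where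
  "proper_groupoid \<alpha> \<beta> \<longleftrightarrow>
     (\<forall>K :: ('x \<times> 'x) set. compact K \<longrightarrow> compact ((\<lambda>g. (\<alpha> g, \<beta> g)) -` K))"

text \<open>The typical fibre F is taken (w.l.o.g.) to be a subspace of E, since it is homeomorphic
 to any fibre over U.\<close>
definition locally_trivial_fibration :: "('e::topological_space \<Rightarrow> 'b::topological_space) \<Rightarrow> bool" where
  "locally_trivial_fibration p \<longleftrightarrow> continuous_on UNIV p \<and>
     (\<forall>b. \<exists>U. open U \<and> b \<in> U \<and> (\<exists>(F :: 'e set) (h :: 'e \<Rightarrow> 'b \<times> 'e).
        homeomorphic_map (subtopology euclidean (p -` U))
          (prod_topology (subtopology euclidean U) (subtopology euclidean F)) h \<and>
        (\<forall>e \<in> p -` U. fst (h e) = p e)))"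

definition groupoid_fixed_point :: "('g \<Rightarrow> 'x) \<Rightarrow> ('g \<Rightarrow> 'x) \<Rightarrow> 'x \<Rightarrow> bool" where
  "groupoid_fixed_point \<alpha> \<beta> x \<longleftrightarrow> {\<alpha> g | g. \<beta> g = x} = {x}"

definition groupoid_invariant :: "('g \<Rightarrow> 'x) \<Rightarrow> ('g \<Rightarrow> 'x) \<Rightarrow> 'x set \<Rightarrow> bool" where
  "groupoid_invariant \<alpha> \<beta> A \<longleftrightarrow> (\<forall>g. \<beta> g \<in> A \<longrightarrow> \<alpha> g \<in> A)"

definition groupoid_stable_point :: "('g \<Rightarrow> 'x::topological_space) \<Rightarrow> ('g \<Rightarrow> 'x) \<Rightarrow> 'x \<Rightarrow> bool" where
  "groupoid_stable_point \<alpha> \<beta> x \<longleftrightarrow>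
     (\<forall>N. open N \<and> x \<in> N \<longrightarrow>
        (\<exists>V. open V \<and> x \<in> V \<and> V \<subseteq> N \<and> groupoid_invariant \<alpha> \<beta> V))"

end

theory Submission
  imports Defs
begin

text \<open>Let \<open>x\<close> be a fixed point and \<open>N\<close> a neighbourhood of \<open>x\<close>. Since every arrow with
  source \<open>x\<close> also has target \<open>x\<close>, the source fibre over \<open>x\<close> is the preimage of \<open>(x, x)\<close>
  under \<open>(\<alpha>, \<beta>)\<close>, hence compact by properness; it lies in the open set \<open>\<alpha>\<^sup>-\<^sup>1(N)\<close>. In a
  local trivialisation of \<open>\<beta>\<close> the tube lemma then gives a neighbourhood \<open>A\<close> of \<open>x\<close> with
  \<open>\<beta>\<^sup>-\<^sup>1(A) \<subseteq> \<alpha>\<^sup>-\<^sup>1(N)\<close>. The saturation \<open>\<beta>(\<alpha>\<^sup>-\<^sup>1(A))\<close> of \<open>A\<close> is invariant, open because a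
  locally trivial fibration is an open map, and contained in \<open>N\<close> by inverting arrows.\<close>

lemma locally_trivial_fibration_open_map:
  assumes "locally_trivial_fibration (p :: 'e::topological_space \<Rightarrow> 'b::topological_space)"
    and "open W"
  shows "open (p ` W)"
proof (subst open_subopen, intro ballI)
  fix b assume "b \<in> p ` W"
  then obtain e where e: "e \<in> W" "p e = b" by auto
  obtain U and F :: "'e set" and h :: "'e \<Rightarrow> 'b \<times> 'e" where U: "open U" "b \<in> U"
    and hom: "homeomorphic_map (subtopology euclidean (p -` U))
          (prod_topology (subtopology euclidean U) (subtopology euclidean F)) h"
    and fst_h: "\<forall>e \<in> p -` U. fst (h e) = p e"
    using assms(1) unfolding locally_trivial_fibration_def by blast
  have "openin (subtopology euclidean (p -` U)) (p -` U \<inter> W)"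
    using \<open>open W\<close> by (simp add: openin_open_Int)
  then have "openin (prod_topology (subtopology euclidean U) (subtopology euclidean F))
      (h ` (p -` U \<inter> W))"
    using homeomorphic_imp_open_map[OF hom] unfolding open_map_def by blast
  then have "openin (subtopology euclidean U) (fst ` h ` (p -` U \<inter> W))"
    using open_map_fst unfolding open_map_def by blast
  then have "open (fst ` h ` (p -` U \<inter> W))"
    using U(1) openin_open_trans by blast
  moreover have "b \<in> fst ` h ` (p -` U \<inter> W)"
    using e U fst_h by (auto intro!: image_eqI)
  moreover have "fst ` h ` (p -` U \<inter> W) \<subseteq> p ` W"
    using fst_h by auto
  ultimately show "\<exists>T. open T \<and> b \<in> T \<and> T \<subseteq> p ` W" by blast
qed

lemma local_trivialization_fibre:
  assumes hom: "homeomorphic_map (subtopology euclidean (p -` U))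
          (prod_topology (subtopology euclidean U) (subtopology euclidean F)) h"
    and fst_h: "\<forall>e \<in> p -` U. fst (h e) = p e"
    and "b \<in> U"
  shows "h ` (p -` {b}) = {b} \<times> F"
proof -
  have image: "h ` (p -` U) = U \<times> F"
    using homeomorphic_imp_surjective_map[OF hom] by simp
  show ?thesis
  proof (intro equalityI subsetI)
    fix z assume "z \<in> h ` (p -` {b})"
    then obtain e where "p e = b" "z = h e" by blast
    then show "z \<in> {b} \<times> F"
      using image fst_h \<open>b \<in> U\<close> by (metis imageI mem_Times_iff singletonI vimageI)
  next
    fix z assume "z \<in> {b} \<times> F"
    then have "z \<in> h ` (p -` U)" using image \<open>b \<in> U\<close> by (auto simp: mem_Times_iff)
    then obtain e where "p e \<in> U" "z = h e" by blast
    then show "z \<in> h ` (p -` {b})"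
      using fst_h \<open>z \<in> {b} \<times> F\<close> by (auto simp: mem_Times_iff)
  qed
qed

lemma local_trivialization_compact_typical_fibre:
  assumes hom: "homeomorphic_map (subtopology euclidean (p -` U))
          (prod_topology (subtopology euclidean U) (subtopology euclidean F)) h"
    and fst_h: "\<forall>e \<in> p -` U. fst (h e) = p e"
    and "b \<in> U" and "compact (p -` {b})"
  shows "compact F"
proof -
  have "continuous_on (p -` U) h"
    using homeomorphic_imp_continuous_map[OF hom]
    by (simp add: subtopology_Times [symmetric] continuous_map_subtopology_eu)
  then have "compact (h ` (p -` {b}))"
    using assms(3,4) by (auto intro: compact_continuous_image continuous_on_subset)
  then have "compact (snd ` h ` (p -` {b}))"
    using compact_continuous_image continuous_on_snd continuous_on_id by blast
  then show ?thesis
    unfolding local_trivialization_fibre[OF hom fst_h \<open>b \<in> U\<close>] by simp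
qed

lemma locally_trivial_fibration_tube:
  assumes "locally_trivial_fibration (p :: 'e::topological_space \<Rightarrow> 'b::topological_space)"
    and "compact (p -` {b})" and "open W" and "p -` {b} \<subseteq> W"
  obtains A where "open A" "b \<in> A" "p -` A \<subseteq> W"
proof -
  obtain U and F :: "'e set" and h :: "'e \<Rightarrow> 'b \<times> 'e" where U: "open U" "b \<in> U"
    and hom: "homeomorphic_map (subtopology euclidean (p -` U))
          (prod_topology (subtopology euclidean U) (subtopology euclidean F)) h"
    and fst_h: "\<forall>e \<in> p -` U. fst (h e) = p e"
    using assms(1) unfolding locally_trivial_fibration_def by blast
  have fibre: "h ` (p -` {b}) = {b} \<times> F"
    using local_trivialization_fibre[OF hom fst_h U(2)] .
  have compact_F: "compactin (subtopology euclidean F) F"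
    using local_trivialization_compact_typical_fibre[OF hom fst_h U(2) assms(2)]
    by (simp add: compactin_subtopology compactin_euclidean_iff)
  define Q where "Q = p -` U \<inter> W"
  have "openin (subtopology euclidean (p -` U)) Q"
    unfolding Q_def using \<open>open W\<close> by (simp add: openin_open_Int)
  then have open_hQ: "openin (prod_topology (subtopology euclidean U) (subtopology euclidean F)) (h ` Q)"
    using homeomorphic_imp_open_map[OF hom] unfolding open_map_def by blast
  have "{b} \<times> F \<subseteq> h ` Q"
    unfolding fibre [symmetric] Q_def using assms(4) U(2) by blast
  then have "\<exists>A B. openin (subtopology euclidean U) A \<and> openin (subtopology euclidean F) B \<and>
      b \<in> A \<and> F \<subseteq> B \<and> A \<times> B \<subseteq> h ` Q"
    using tube_lemma_right[OF open_hQ compact_F] U(2) by simp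
  then obtain A B where A: "openin (subtopology euclidean U) A" "b \<in> A"
    and B: "F \<subseteq> B" and AB: "A \<times> B \<subseteq> h ` Q"
    by blast
  have "p -` A \<subseteq> W"
  proof
    fix e assume "e \<in> p -` A"
    moreover have "A \<subseteq> U" using A(1) openin_imp_subset by force
    ultimately have e: "e \<in> p -` U" by blast
    then have "h e \<in> U \<times> F"
      using homeomorphic_imp_surjective_map[OF hom] by auto
    moreover have "fst (h e) = p e" using fst_h e by blast
    ultimately have "h e \<in> A \<times> B"
      using \<open>e \<in> p -` A\<close> B by (auto simp: mem_Times_iff)
    then have "h e \<in> h ` Q" by (rule subsetD[OF AB])
    then obtain q where q: "q \<in> Q" "h e = h q" by blast
    have "inj_on h (p -` U)"
      using homeomorphic_imp_injective_map[OF hom] by simp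
    then have "e = q"
      using q e unfolding Q_def by (auto dest: inj_onD)
    then show "e \<in> W" using q(1) unfolding Q_def by blast
  qed
  moreover have "open A" using A(1) U(1) openin_open_trans by blast
  ultimately show ?thesis using that A(2) by blast
qed

definition groupoid_saturation :: "('g \<Rightarrow> 'x) \<Rightarrow> ('g \<Rightarrow> 'x) \<Rightarrow> 'x set \<Rightarrow> 'x set" where
  "groupoid_saturation \<alpha> \<beta> A = \<beta> ` (\<alpha> -` A)"

lemma subset_groupoid_saturation:
  assumes "topological_groupoid \<alpha> \<beta> gmul gunit invg"
  shows "A \<subseteq> groupoid_saturation \<alpha> \<beta> A"
proof
  fix y assume "y \<in> A"
  moreover have "\<alpha> (gunit y) = y" "\<beta> (gunit y) = y"
    using assms unfolding topological_groupoid_def by auto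
  ultimately show "y \<in> groupoid_saturation \<alpha> \<beta> A"
    unfolding groupoid_saturation_def by (metis image_eqI vimageI)
qed

lemma groupoid_invariant_saturation:
  assumes "topological_groupoid \<alpha> \<beta> gmul gunit invg"
  shows "groupoid_invariant \<alpha> \<beta> (groupoid_saturation \<alpha> \<beta> A)"
  unfolding groupoid_invariant_def
proof (intro allI impI)
  fix k assume "\<beta> k \<in> groupoid_saturation \<alpha> \<beta> A"
  then obtain g where g: "\<alpha> g \<in> A" "\<beta> g = \<beta> k"
    unfolding groupoid_saturation_def by auto
  have "\<alpha> (gmul g (invg k)) = \<alpha> g" "\<beta> (gmul g (invg k)) = \<alpha> k"
    using assms g(2) unfolding topological_groupoid_def by auto
  then show "\<alpha> k \<in> groupoid_saturation \<alpha> \<beta> A"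
    unfolding groupoid_saturation_def using g(1) by (metis image_eqI vimageI)
qed

lemma groupoid_saturation_subset:
  assumes "topological_groupoid \<alpha> \<beta> gmul gunit invg" and "\<beta> -` A \<subseteq> \<alpha> -` N"
  shows "groupoid_saturation \<alpha> \<beta> A \<subseteq> N"
proof
  fix y assume "y \<in> groupoid_saturation \<alpha> \<beta> A"
  then obtain g where g: "\<alpha> g \<in> A" "\<beta> g = y"
    unfolding groupoid_saturation_def by auto
  have "\<beta> (invg g) = \<alpha> g" "\<alpha> (invg g) = \<beta> g"
    using assms(1) unfolding topological_groupoid_def by auto
  then show "y \<in> N" using assms(2) g by (metis subsetD vimageE vimageI)
qed

lemma open_groupoid_saturation:
  assumes "topological_groupoid \<alpha> \<beta> gmul gunit invg" and "locally_trivial_fibration \<beta>"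
    and "open A"
  shows "open (groupoid_saturation \<alpha> \<beta> A)"
proof -
  have "continuous_on UNIV \<alpha>"
    using assms(1) unfolding topological_groupoid_def by blast
  then have "open (\<alpha> -` A)" using \<open>open A\<close> open_vimage by blast
  then show ?thesis
    unfolding groupoid_saturation_def
    using locally_trivial_fibration_open_map[OF assms(2)] by blast
qed

lemma compact_source_fibre_fixed_point:
  assumes "proper_groupoid \<alpha> \<beta>" and "groupoid_fixed_point \<alpha> \<beta> x"
  shows "compact (\<beta> -` {x})"
proof -
  have "\<beta> -` {x} = (\<lambda>g. (\<alpha> g, \<beta> g)) -` {(x, x)}"
    using assms(2) unfolding groupoid_fixed_point_def by blast
  then show ?thesis
    using assms(1) unfolding proper_groupoid_def by simp
qed

theorem theorem3p3:
  fixes \<alpha> \<beta> :: "'g::t2_space \<Rightarrow> 'x::t2_space"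
    and gmul :: "'g \<Rightarrow> 'g \<Rightarrow> 'g" and gunit :: "'x \<Rightarrow> 'g" and invg :: "'g \<Rightarrow> 'g"
  assumes "topological_groupoid \<alpha> \<beta> gmul gunit invg"
    and "proper_groupoid \<alpha> \<beta>"
    and "locally_trivial_fibration \<beta>"
    and "groupoid_fixed_point \<alpha> \<beta> x"
  shows "groupoid_stable_point \<alpha> \<beta> x"
  unfolding groupoid_stable_point_def
proof (intro allI impI, elim conjE)
  fix N assume "open N" "x \<in> N"
  have "continuous_on UNIV \<alpha>"
    using assms(1) unfolding topological_groupoid_def by blast
  then have "open (\<alpha> -` N)" using \<open>open N\<close> open_vimage by blast
  moreover have "\<beta> -` {x} \<subseteq> \<alpha> -` N"
    using assms(4) \<open>x \<in> N\<close> unfolding groupoid_fixed_point_def by blast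
  ultimately obtain A where A: "open A" "x \<in> A" "\<beta> -` A \<subseteq> \<alpha> -` N"
    using locally_trivial_fibration_tube[OF assms(3) compact_source_fibre_fixed_point[OF assms(2,4)]]
    by blast
  let ?V = "groupoid_saturation \<alpha> \<beta> A"
  have "open ?V" using open_groupoid_saturation[OF assms(1,3) A(1)] .
  moreover have "x \<in> ?V" using subset_groupoid_saturation[OF assms(1)] A(2) by blast
  moreover have "?V \<subseteq> N" using groupoid_saturation_subset[OF assms(1) A(3)] .
  ultimately show "\<exists>V. open V \<and> x \<in> V \<and> V \<subseteq> N \<and> groupoid_invariant \<alpha> \<beta> V"
    using groupoid_invariant_saturation[OF assms(1)] by blast
qed

end
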